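(* Let $n_u, K, C, I$ be positive integers. For each $c\in\{1,\dots,C\}$, each $k\in\{1,\dots,K\}$ and each $i\in\{0,1,\dots,I\}$, let $\hat{\Sigma}^{i,c}_k$ be a symmetric positive definite $n_u\times n_u$ real matrix written as $\hat{\Sigma}^{i,c}_k=(\hat{\Sigma}^{\frac12,i,c}_k)^\top \hat{\Sigma}^{\frac12,i,c}_k$ for some square-root factor $\hat{\Sigma}^{\frac12,i,c}_k\in\mathbb{R}^{n_u\times n_u}$. Set $\hat{\sigma}^{i,c}_k=\operatorname{vec}(\hat{\Sigma}^{\frac12,i,c}_k)\in\mathbb{R}^{n_u^2}$ and $\hat{\sigma}^{i,c}=\operatorname{col}(\hat{\sigma}^{i,c}_1,\dots,\hat{\sigma}^{i,c}_K)\in\mathbb{R}^{n_u^2K}$. Assume that for every $c$ and every $i\in\{0,\dots,I-1\}$ the update $$\hat{\sigma}^{i+1,c}=\mathcal{I}^{i,c}_\Sigma\,\hat{\sigma}^{i,c}$$ holds, where $\mathcal{I}^{i,c}_\Sigma$ is a symmetric $n_u^2K\times n_u^2K$ matrix satisfying $0\le \mathcal{I}^{i,c}_\Sigma\le \mathbf{I}$ in the positive semidefinite (Loewner) order. For each $k$ define $$\Sigma^L_k=\left(\frac{1}{C}\sum_{c=1}^C\big(\operatorname{diag}(\sigma(\hat{\Sigma}^{I,c}_k))\big)^{-1}\right)^{-1},$$ where $\sigma(\hat{\Sigma}^{I,c}_k)$ denotes the vector of the $n_u$ eigenvalues of $\hat{\Sigma}^{I,c}_k$ and $\operatorname{diag}(\cdot)$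 the diagonal matrix with that vector on its diagonal. Then $$\sum_{k=1}^K \operatorname{Tr}\big((\Sigma^L_k)^{-1}\big)\;\ge\;\frac{n_u^2K^2}{C}\sum_{c=1}^C\left(\sum_{k=1}^K\operatorname{Tr}\hat{\Sigma}^{0,c}_k\right)^{-1}.$$
   Context: Here $\operatorname{vec}(\cdot)$ stacks the columns of a matrix into a single vector, $\operatorname{col}(\cdot)$ denotes vertical concatenation of vectors, and $\mathbf{I}$ is the identity matrix. In the paper, $\hat{\Sigma}^{i,c}_k$ is the covariance of a time-varying linear Gaussian control policy $\mathcal{N}(\hat F^{i,c}_k x_k+\hat e^{i,c}_k,\hat{\Sigma}^{i,c}_k)$ at time step $k$ of an episode of length $K$, obtained at iteration $i$ of an expectation-maximization procedure started from the $c$-th of $C$ initial-state distributions, with control dimension $n_u$; $\mathcal{I}^{i,c}_\Sigma$ is the principal block (corresponding to the covariance parameters) of the EM information matrix, and $\Sigma^L_k$ is the covariance of the learned global (neural-network) Gaussian policy at time step $k$. *)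

theory Defs
  imports "HOL-Analysis.Analysis"
begin

definition sym_mat :: "real^'n^'n \<Rightarrow> bool" where
  "sym_mat A \<longleftrightarrow> transpose A = A"

definition pos_def :: "real^'n^'n \<Rightarrow> bool" where
  "pos_def A \<longleftrightarrow> sym_mat A \<and> (\<forall>x. x \<noteq> 0 \<longrightarrow> x \<bullet> (A *v x) > 0)"

definition pos_semidef :: "real^'n^'n \<Rightarrow> bool" where
  "pos_semidef A \<longleftrightarrow> sym_mat A \<and> (\<forall>x. x \<bullet> (A *v x) \<ge> 0)"

definition loewner_le :: "real^'n^'n \<Rightarrow> real^'n^'n \<Rightarrow> bool" where
  "loewner_le A B \<longleftrightarrow> pos_semidef (B - A)"

text \<open>v lists the eigenvalues of A with algebraic multiplicity, i.e. the
  characteristic polynomial det(x I - A) factors as the product of (x - v_j).\<close>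
definition eigenvalue_vector :: "real^'n^'n \<Rightarrow> real^'n \<Rightarrow> bool" where
  "eigenvalue_vector A v \<longleftrightarrow> (\<forall>x::real. det (x *\<^sub>R mat 1 - A) = (\<Prod>j\<in>UNIV. x - v $ j))"

definition diagm :: "real^'n \<Rightarrow> real^'n^'n" where
  "diagm v = (\<chi> i j. if i = j then v $ i else 0)"

text \<open>Column-stacking vectorisation: entry (col, row) is A_{row,col}.\<close>
definition vecm :: "real^'n^'n \<Rightarrow> real^('n \<times> 'n)" where
  "vecm A = (\<chi> p. A $ snd p $ fst p)"

definition colv :: "('k::finite \<Rightarrow> real^'m::finite) \<Rightarrow> real^('k \<times> 'm)" where
  "colv v = (\<chi> p. v (fst p) $ snd p)"

end

theory Submission
  imports Defs "HOL-Computational_Algebra.Polynomial"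
begin

text \<open>The matrix inverted in the global covariance is diagonal, so the left-hand side is
  the average over c of the sum of 1/lambda over all eigenvalues lambda of the final
  covariances of run c. For each c, the arithmetic-harmonic mean inequality bounds this sum
  below by (n K)^2 divided by the sum of those eigenvalues, which is the sum of the traces of
  the final covariances, i.e. the squared norm of the stacked square-root factors. Each EM
  update multiplies that vector by a symmetric matrix between 0 and the identity, which is a
  contraction, so this squared norm never exceeds its initial value.\<close>

definition char_poly :: "real^'n^'n \<Rightarrow> real poly" where
  "char_poly A = (\<Sum>p | p permutes (UNIV::'n set).
     smult (of_int (sign p)) (\<Prod>i\<in>UNIV. [:- A$i$p i, if p i = i then 1 else 0:]))"

lemma poly_char_poly: "poly (char_poly A) x = det (x *\<^sub>R mat 1 - A)"
  unfolding char_poly_def det_def poly_sum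
  by (intro sum.cong refl) (auto simp: poly_prod mat_def intro!: prod.cong)

lemma coeff_prod_linear_factors:
  fixes a :: "'i \<Rightarrow> real"
  assumes "finite S" "S \<noteq> {}"
  shows "coeff (\<Prod>i\<in>S. [:- a i, 1:]) (card S - 1) = - sum a S"
  using assms
proof (induction S rule: finite_ne_induct)
  case (insert b F)
  let ?P = "\<Prod>i\<in>F. [:- a i, 1:]"
  have "degree ?P = card F"
    by (subst degree_prod_eq_sum_degree) auto
  moreover have "lead_coeff ?P = 1"
    by (simp add: lead_coeff_prod)
  ultimately have "coeff ?P (card F) = 1" by simp
  moreover obtain m where "card F = Suc m" using insert by (cases "card F") auto
  ultimately show ?case using insert by simp
qed simp

lemma card_fixpoints_le:
  assumes "p permutes (UNIV::'n::finite set)" "p \<noteq> id"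
  shows "card {i. p i = i} + 2 \<le> CARD('n)"
proof -
  obtain i where i: "p i \<noteq> i" using assms(2) by (auto simp: fun_eq_iff)
  have "p (p i) \<noteq> p i"
    using i permutes_inj[OF assms(1)] by (auto dest: injD)
  then have "{i. p i = i} \<subseteq> UNIV - {i, p i}" using i by auto
  then have "card {i. p i = i} \<le> card (UNIV - {i, p i})" by (intro card_mono) auto
  moreover have "card {i, p i} \<le> CARD('n)" by (rule card_mono) auto
  ultimately show ?thesis using i by (simp add: card_Diff_subset)
qed

lemma coeff_char_poly_subleading: "coeff (char_poly A) (CARD('n) - 1) = - trace (A::real^'n^'n)"
proof -
  let ?P = "{p. p permutes (UNIV::'n set)}"
  let ?t = "\<lambda>p. smult (of_int (sign p)) (\<Prod>i\<in>UNIV. [:- A$i$p i, if p i = i then 1 else 0:])"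
  have "coeff (?t p) (CARD('n) - 1) = 0" if "p \<in> ?P - {id}" for p
  proof (rule coeff_eq_0)
    have "degree (\<Prod>i\<in>UNIV. [:- A$i$p i, if p i = i then 1 else 0:])
        \<le> (\<Sum>i\<in>UNIV. if p i = i then 1 else 0)"
      by (rule order.trans[OF degree_prod_sum_le]) (auto intro: sum_mono)
    also have "\<dots> = card {i. p i = i}" by (simp add: sum.If_cases)
    finally show "degree (?t p) < CARD('n) - 1"
      using card_fixpoints_le[of p] that by simp
  qed
  then have "coeff (char_poly A) (CARD('n) - 1) = coeff (?t id) (CARD('n) - 1)"
    unfolding char_poly_def coeff_sum
    by (subst sum.remove[of _ id]) (auto simp: finite_permutations permutes_id)
  also have "\<dots> = - trace A"
    using coeff_prod_linear_factors[of "UNIV::'n set" "\<lambda>i. A$i$i"]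
    by (simp add: sign_id trace_def)
  finally show ?thesis .
qed

lemma eigenvalue_vector_sum_eq_trace:
  assumes "eigenvalue_vector (A::real^'n^'n) v"
  shows "(\<Sum>j\<in>UNIV. v$j) = trace A"
proof -
  have "char_poly A = (\<Prod>j\<in>UNIV. [:- v$j, 1:])"
    using assms
    by (simp add: poly_eq_poly_eq_iff[symmetric] fun_eq_iff poly_char_poly poly_prod
        eigenvalue_vector_def)
  then show ?thesis
    using coeff_char_poly_subleading[of A] coeff_prod_linear_factors[of "UNIV::'n set" "\<lambda>j. v$j"]
    by simp
qed

lemma eigenvalue_vector_pos:
  assumes "pos_def (A::real^'n^'n)" and "eigenvalue_vector A v"
  shows "v$j > 0"
proof -
  let ?M = "v$j *\<^sub>R mat 1 - A"
  have "det ?M = (\<Prod>i\<in>UNIV. v$j - v$i)"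
    using assms(2) by (simp add: eigenvalue_vector_def)
  also have "\<dots> = 0" by (rule prod_zero) auto
  finally obtain x where x: "?M *v x = 0" "x \<noteq> 0"
    by (metis invertible_det_nz invertible_left_inverse matrix_left_invertible_ker)
  then have Ax: "A *v x = v$j *\<^sub>R x"
    by (simp add: matrix_vector_mult_diff_rdistrib scaleR_matrix_vector_assoc[symmetric])
  have "0 < x \<bullet> (A *v x)" using assms(1) x(2) by (simp add: pos_def_def)
  also have "\<dots> = v$j * (x \<bullet> x)" by (simp add: Ax)
  finally show ?thesis using inner_ge_zero[of x] by (simp add: zero_less_mult_iff)
qed

lemma sym_mat_inner: "sym_mat A \<Longrightarrow> u \<bullet> (A *v w) = (A *v u) \<bullet> (w::real^'n)"
  by (metis dot_lmul_matrix inner_commute sym_mat_def vector_transpose_matrix)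

lemma loewner_contraction:
  fixes A :: "real^'n^'n"
  assumes "sym_mat A" "loewner_le 0 A" "loewner_le A (mat 1)"
  shows "(A *v x) \<bullet> (A *v x) \<le> x \<bullet> x"
proof -
  have A_nonneg: "0 \<le> z \<bullet> (A *v z)" for z
    using assms(2) by (simp add: loewner_le_def pos_semidef_def)
  have A_le_1: "z \<bullet> (A *v z) \<le> z \<bullet> z" for z
    using assms(3)
    by (simp add: loewner_le_def pos_semidef_def matrix_vector_mult_diff_rdistrib inner_diff_right)
  define y where "y = A *v x"
  txt \<open>Write \<open>x\<bullet>x - y\<bullet>y\<close> as the sum of the nonnegative forms of \<open>1 - A\<close> at x, of A at
    \<open>x - y\<close>, and of \<open>1 - A\<close> at y.\<close>
  have "x \<bullet> (A *v y) = y \<bullet> y" using sym_mat_inner[OF assms(1)] by (simp add: y_def)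
  then have "x \<bullet> x - y \<bullet> y
      = (x \<bullet> x - x \<bullet> (A *v x)) + (x - y) \<bullet> (A *v (x - y)) + (y \<bullet> y - y \<bullet> (A *v y))"
    by (simp add: y_def matrix_vector_mult_diff_distrib inner_diff_left inner_diff_right
        inner_commute)
  also have "\<dots> \<ge> 0" using A_nonneg[of "x - y"] A_le_1[of x] A_le_1[of y] by linarith
  finally show ?thesis by (simp add: y_def)
qed

lemma trace_transpose_mult_self: "trace (transpose S ** S) = vecm S \<bullet> vecm (S::real^'n^'n)"
  by (simp add: trace_def matrix_matrix_mult_def transpose_def inner_vec_def vecm_def
      sum.cartesian_product case_prod_beta)

lemma inner_colv: "colv v \<bullet> colv w = (\<Sum>k\<in>UNIV. v k \<bullet> w k)"
  by (simp add: inner_vec_def colv_def sum.cartesian_product case_prod_beta)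

lemma matrix_inv_unique:
  fixes A B :: "real^'n^'n"
  assumes "A ** B = mat 1" "B ** A = mat 1"
  shows "matrix_inv A = B"
proof -
  have inv: "A ** matrix_inv A = mat 1 \<and> matrix_inv A ** A = mat 1"
    unfolding matrix_inv_def by (rule someI[of _ B]) (use assms in auto)
  have "matrix_inv A = (matrix_inv A ** A) ** B"
    by (simp add: assms(1) matrix_mul_assoc[symmetric] matrix_mul_rid)
  also have "\<dots> = B" using inv by (simp add: matrix_mul_lid)
  finally show ?thesis .
qed

lemma diagm_mult: "diagm a ** diagm b = diagm (\<chi> i. a$i * b$i)"
proof -
  have "(\<Sum>k\<in>UNIV. (if i = k then a$i else 0) * (if k = j then b$k else 0))
      = (\<Sum>k\<in>UNIV. if k = i then (if i = j then a$i * b$i else 0) else 0)" for i j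
    by (rule sum.cong) auto
  then show ?thesis by (simp add: diagm_def matrix_matrix_mult_def vec_eq_iff)
qed

lemma matrix_inv_diagm:
  assumes "\<And>i. a$i \<noteq> 0"
  shows "matrix_inv (diagm a) = diagm (\<chi> i. inverse (a$i))"
  by (rule matrix_inv_unique)
    (simp_all only: diagm_mult, simp_all add: assms diagm_def mat_def vec_eq_iff)

lemma sum_diagm: "(\<Sum>c\<in>S. diagm (f c)) = diagm (\<Sum>c\<in>S. f c)"
  by (induction S rule: infinite_finite_induct) (auto simp: diagm_def vec_eq_iff)

lemma scaleR_diagm: "r *\<^sub>R diagm a = diagm (r *\<^sub>R a)"
  by (auto simp: diagm_def vec_eq_iff)

lemma trace_diagm: "trace (diagm a) = (\<Sum>i\<in>UNIV. a$i)"
  by (simp add: trace_def diagm_def)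

lemma trace_inverse_mean_inverse_diagm:
  fixes a :: "'c::finite \<Rightarrow> real^'n"
  assumes "\<And>c i. a c $ i > 0"
  shows "trace (matrix_inv (matrix_inv
      ((1 / real CARD('c)) *\<^sub>R (\<Sum>c\<in>UNIV. matrix_inv (diagm (a c))))))
    = (1 / real CARD('c)) * (\<Sum>c\<in>UNIV. \<Sum>i\<in>UNIV. 1 / a c $ i)"
proof -
  define w where "w = (1 / real CARD('c)) *\<^sub>R (\<Sum>c\<in>UNIV. \<chi> i. inverse (a c $ i))"
  have "w $ i > 0" for i
    unfolding w_def using assms by (auto simp: sum_component intro!: sum_pos divide_pos_pos)
  then have "matrix_inv (matrix_inv (diagm w)) = diagm w"
    by (simp add: matrix_inv_diagm less_imp_neq[symmetric] vec_eq_iff)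
  moreover have "(1 / real CARD('c)) *\<^sub>R (\<Sum>c\<in>UNIV. matrix_inv (diagm (a c))) = diagm w"
    using assms by (simp add: matrix_inv_diagm less_imp_neq[symmetric] sum_diagm scaleR_diagm w_def)
  ultimately show ?thesis
    by (simp add: trace_diagm w_def sum_component divide_inverse sum_distrib_left
        sum.swap[of _ "UNIV::'n set"])
qed

lemma card_squared_le_sum_times_sum_inverse:
  fixes a :: "'i \<Rightarrow> real"
  assumes "\<And>x. x \<in> S \<Longrightarrow> a x > 0"
  shows "real (card S)^2 \<le> sum a S * (\<Sum>x\<in>S. 1 / a x)"
proof -
  have "(\<Sum>x\<in>S. sqrt (a x) * (1 / sqrt (a x))) = (\<Sum>x\<in>S. 1)"
    using assms by (intro sum.cong) (simp_all add: less_imp_neq[symmetric])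
  then have card: "real (card S) = (\<Sum>x\<in>S. sqrt (a x) * (1 / sqrt (a x)))"
    by simp
  have "(\<Sum>x\<in>S. sqrt (a x) * (1 / sqrt (a x)))\<^sup>2
      \<le> (\<Sum>x\<in>S. (sqrt (a x))\<^sup>2) * (\<Sum>x\<in>S. (1 / sqrt (a x))\<^sup>2)"
    by (rule Cauchy_Schwarz_ineq_sum)
  also have "\<dots> = sum a S * (\<Sum>x\<in>S. 1 / a x)"
    using assms
    by (intro arg_cong2[where f="(*)"] sum.cong refl) (simp_all add: power_divide less_imp_le)
  finally show ?thesis unfolding card .
qed

lemma iterate_contraction_inner_le:
  fixes s :: "nat \<Rightarrow> real^'m"
  assumes "\<And>i. i < n \<Longrightarrow> sym_mat (M i) \<and> loewner_le 0 (M i) \<and> loewner_le (M i) (mat 1)"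
    and "\<And>i. i < n \<Longrightarrow> s (Suc i) = M i *v s i"
  shows "s n \<bullet> s n \<le> s 0 \<bullet> s 0"
  using assms
proof (induction n)
  case (Suc n)
  then have "s (Suc n) \<bullet> s (Suc n) \<le> s n \<bullet> s n"
    using loewner_contraction[of "M n" "s n"] by simp
  with Suc show ?case by simp
qed simp

lemma sum_trace_gram_nonincreasing:
  fixes S :: "nat \<Rightarrow> 'k::finite \<Rightarrow> real^'n^'n"
  assumes "\<And>i. i < n \<Longrightarrow> sym_mat (M i) \<and> loewner_le 0 (M i) \<and> loewner_le (M i) (mat 1)"
    and "\<And>i. i < n \<Longrightarrow> colv (\<lambda>k. vecm (S (Suc i) k)) = M i *v colv (\<lambda>k. vecm (S i k))"
  shows "(\<Sum>k\<in>UNIV. trace (transpose (S n k) ** S n k))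
    \<le> (\<Sum>k\<in>UNIV. trace (transpose (S 0 k) ** S 0 k))"
  using iterate_contraction_inner_le[of n M "\<lambda>i. colv (\<lambda>k. vecm (S i k))"] assms
  by (simp add: trace_transpose_mult_self inner_colv)

lemma sum_inverse_ge_card_squared_div:
  fixes a :: "'k::finite \<Rightarrow> real^'n"
  assumes "\<And>k i. a k $ i > 0" and "(\<Sum>k\<in>UNIV. \<Sum>i\<in>UNIV. a k $ i) \<le> t"
  shows "(real CARD('n) * real CARD('k))^2 / t \<le> (\<Sum>k\<in>UNIV. \<Sum>i\<in>UNIV. 1 / a k $ i)"
proof -
  let ?S = "\<Sum>k\<in>UNIV. \<Sum>i\<in>UNIV. a k $ i"
  have "(real CARD('k) * real CARD('n))^2 \<le> ?S * (\<Sum>k\<in>UNIV. \<Sum>i\<in>UNIV. 1 / a k $ i)"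
    using card_squared_le_sum_times_sum_inverse[of UNIV "\<lambda>p::'k \<times> 'n. a (fst p) $ snd p"] assms(1)
    by (simp add: sum.cartesian_product case_prod_beta)
  also have "\<dots> \<le> t * (\<Sum>k\<in>UNIV. \<Sum>i\<in>UNIV. 1 / a k $ i)"
    using assms by (intro mult_right_mono sum_nonneg) (auto simp: less_imp_le)
  finally have "(real CARD('n) * real CARD('k))^2 \<le> t * (\<Sum>k\<in>UNIV. \<Sum>i\<in>UNIV. 1 / a k $ i)"
    by (simp add: mult.commute)
  moreover have "0 < ?S" using assms(1) by (intro sum_pos) auto
  ultimately show ?thesis using assms(2) by (simp add: pos_divide_le_eq mult.commute)
qed

theorem theorem1:
  fixes Sig Shalf :: "nat \<Rightarrow> 'c::finite \<Rightarrow> 'k::finite \<Rightarrow> real^'n::finite^'n"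
    and Info :: "nat \<Rightarrow> 'c \<Rightarrow> real^('k \<times> 'n \<times> 'n)^('k \<times> 'n \<times> 'n)"
    and lam :: "'c \<Rightarrow> 'k \<Rightarrow> real^'n"
    and I :: nat
  assumes I_pos: "I \<ge> 1"
    and Sig_pd: "\<And>i c k. i \<le> I \<Longrightarrow> pos_def (Sig i c k)"
    and Sig_sqrt: "\<And>i c k. i \<le> I \<Longrightarrow> Sig i c k = transpose (Shalf i c k) ** Shalf i c k"
    and Info_sym: "\<And>i c. i < I \<Longrightarrow> sym_mat (Info i c)"
    and Info_ge0: "\<And>i c. i < I \<Longrightarrow> loewner_le 0 (Info i c)"
    and Info_le1: "\<And>i c. i < I \<Longrightarrow> loewner_le (Info i c) (mat 1)"
    and update: "\<And>i c. i < I \<Longrightarrow>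
        colv (\<lambda>k. vecm (Shalf (Suc i) c k)) = Info i c *v colv (\<lambda>k. vecm (Shalf i c k))"
    and lam_eig: "\<And>c k. eigenvalue_vector (Sig I c k) (lam c k)"
  shows "(\<Sum>k\<in>UNIV. trace (matrix_inv
            (matrix_inv ((1 / real CARD('c)) *\<^sub>R (\<Sum>c\<in>UNIV. matrix_inv (diagm (lam c k)))))))
         \<ge> real (CARD('n))^2 * real (CARD('k))^2 / real CARD('c) *
            (\<Sum>c\<in>UNIV. inverse (\<Sum>k\<in>UNIV. trace (Sig 0 c k)))"
proof -
  have lam_pos: "\<And>c k j. lam c k $ j > 0"
    using eigenvalue_vector_pos[OF Sig_pd lam_eig] by simp
  define T0 where "T0 c = (\<Sum>k\<in>UNIV. trace (Sig 0 c k))" for c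
  have eigenvalues_sum_le: "(\<Sum>k\<in>UNIV. \<Sum>j\<in>UNIV. lam c k $ j) \<le> T0 c" for c
    using sum_trace_gram_nonincreasing[of I "\<lambda>i. Info i c" "\<lambda>i. Shalf i c"]
    by (simp add: T0_def Sig_sqrt eigenvalue_vector_sum_eq_trace[OF lam_eig] Info_sym Info_ge0
        Info_le1 update)
  have lhs_k: "trace (matrix_inv (matrix_inv ((1 / real CARD('c)) *\<^sub>R
        (\<Sum>c\<in>UNIV. matrix_inv (diagm (lam c k))))))
      = (1 / real CARD('c)) * (\<Sum>c\<in>UNIV. \<Sum>j\<in>UNIV. 1 / lam c k $ j)" for k
    by (rule trace_inverse_mean_inverse_diagm) (rule lam_pos)
  have "real CARD('n)^2 * real CARD('k)^2 / real CARD('c) * (\<Sum>c\<in>UNIV. inverse (T0 c))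
      = (1 / real CARD('c)) * (\<Sum>c\<in>UNIV. (real CARD('n) * real CARD('k))^2 / T0 c)"
    by (simp add: sum_distrib_left sum_distrib_right divide_inverse power_mult_distrib mult_ac)
  also have "\<dots> \<le> (1 / real CARD('c)) * (\<Sum>c\<in>UNIV. \<Sum>k\<in>UNIV. \<Sum>j\<in>UNIV. 1 / lam c k $ j)"
    by (intro mult_left_mono sum_mono sum_inverse_ge_card_squared_div lam_pos eigenvalues_sum_le) auto
  also have "\<dots> = (\<Sum>k\<in>UNIV. trace (matrix_inv (matrix_inv ((1 / real CARD('c)) *\<^sub>R
        (\<Sum>c\<in>UNIV. matrix_inv (diagm (lam c k)))))))"
    by (simp only: lhs_k sum_distrib_left sum.swap[of _ "UNIV::'k set" "UNIV::'c set"])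
  finally show ?thesis by (simp add: T0_def)
qed

end
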